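(* Let $w_1, w_2 \geq 0$ with $w_1 + w_2 > 0$. Both for the class of sequential two-player weighted congestion games with affine costs, proportional cost functions and player weights $w_1,w_2$ (player 1 moving first), and for its subclass of network routing games, the price of anarchy (with respect to subgame-perfect equilibria) is equal to \[ 1 + \frac{w_1w_2}{w_1^2 + w_2^2}. \]
   Context: A weighted two-player congestion game with affine costs consists of a finite set $R$ of resources, coefficients $\alpha_r,\beta_r \geq 0$ for each $r\in R$, two players $i=1,2$ with weights $w_i\ge 0$, and for each player $i$ a nonempty finite set $\mathcal{A}_i \subseteq 2^R$ of actions. For an action profile $A=(A_1,A_2)$ the load of $r$ is $x_r(A)=\sum_{j:\, r\in A_j} w_j$. With proportional costs, player $i$ pays $C_i(A)=w_i\sum_{r\in A_i}(\alpha_r+\beta_r x_r(A))$. The social cost is $C(A)=C_1(A)+C_2(A)$. In a network routing game, $R$ is the arc set of a directed graph, player $i$ has a source $s_i$ and sink $t_i$, and $\mathcal{A}_i$ is the set of arc sets of directed $s_i$–$t_i$ paths. In the sequential game, player 1 (weight $w_1$) chooses $A_1$ first, then player 2 (weight $w_2$), knowing $A_1$, chooses $A_2$. A subgame-perfect equilibrium consists of a function $A_1\mapsto A_2^*(A_1)$ with $C_2(A_1,A_2^*(A_1))\le C_2(A_1,A_2)$ for all $A_1,A_2$, and an action $A_1^*$ with $C_1(A_1^*,A_2^*(A_1^* ))\le C_1(A_1,A_2^*(A_1))$ for all $A_1$; its outcome is $(A_1^*,A_2^*(A_1^* ))$. The price of anarchy of an instance is the maximum over subgame-perfect equilibrium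 outcomes $A$ of $C(A)/\min_{A'}C(A')$; the price of anarchy of a class is the supremum over all instances (with positive optimal social cost). *)

theory Defs
  imports Main "HOL.Real"
begin

definition load :: "real \<Rightarrow> real \<Rightarrow> 'r set \<Rightarrow> 'r set \<Rightarrow> 'r \<Rightarrow> real" where
  "load w1 w2 A1 A2 r = (if r \<in> A1 then w1 else 0) + (if r \<in> A2 then w2 else 0)"

definition cost1 :: "('r \<Rightarrow> real) \<Rightarrow> ('r \<Rightarrow> real) \<Rightarrow> real \<Rightarrow> real \<Rightarrow> 'r set \<Rightarrow> 'r set \<Rightarrow> real" where
  "cost1 \<alpha> \<beta> w1 w2 A1 A2 = w1 * (\<Sum>r\<in>A1. \<alpha> r + \<beta> r * load w1 w2 A1 A2 r)"

definition cost2 :: "('r \<Rightarrow> real) \<Rightarrow> ('r \<Rightarrow> real) \<Rightarrow> real \<Rightarrow> real \<Rightarrow> 'r set \<Rightarrow> 'r set \<Rightarrow> real" where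
  "cost2 \<alpha> \<beta> w1 w2 A1 A2 = w2 * (\<Sum>r\<in>A2. \<alpha> r + \<beta> r * load w1 w2 A1 A2 r)"

definition social_cost :: "('r \<Rightarrow> real) \<Rightarrow> ('r \<Rightarrow> real) \<Rightarrow> real \<Rightarrow> real \<Rightarrow> 'r set \<Rightarrow> 'r set \<Rightarrow> real" where
  "social_cost \<alpha> \<beta> w1 w2 A1 A2 = cost1 \<alpha> \<beta> w1 w2 A1 A2 + cost2 \<alpha> \<beta> w1 w2 A1 A2"

definition valid_game :: "'r set \<Rightarrow> ('r \<Rightarrow> real) \<Rightarrow> ('r \<Rightarrow> real) \<Rightarrow> 'r set set \<Rightarrow> 'r set set \<Rightarrow> bool" where
  "valid_game R \<alpha> \<beta> As1 As2 \<longleftrightarrow>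
     finite R \<and> (\<forall>r\<in>R. \<alpha> r \<ge> 0 \<and> \<beta> r \<ge> 0) \<and>
     finite As1 \<and> As1 \<noteq> {} \<and> (\<forall>A\<in>As1. A \<subseteq> R) \<and>
     finite As2 \<and> As2 \<noteq> {} \<and> (\<forall>A\<in>As2. A \<subseteq> R)"

text \<open>Subgame-perfect equilibrium of the sequential game (player 1 moves first):
  a strategy f of player 2 (reaction to A1) and an action A1s of player 1.\<close>

definition is_spe :: "('r \<Rightarrow> real) \<Rightarrow> ('r \<Rightarrow> real) \<Rightarrow> real \<Rightarrow> real \<Rightarrow> 'r set set \<Rightarrow> 'r set set
    \<Rightarrow> ('r set \<Rightarrow> 'r set) \<Rightarrow> 'r set \<Rightarrow> bool" where
  "is_spe \<alpha> \<beta> w1 w2 As1 As2 f A1s \<longleftrightarrow>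
     (\<forall>A1\<in>As1. f A1 \<in> As2 \<and>
        (\<forall>A2\<in>As2. cost2 \<alpha> \<beta> w1 w2 A1 (f A1) \<le> cost2 \<alpha> \<beta> w1 w2 A1 A2)) \<and>
     A1s \<in> As1 \<and>
     (\<forall>A1\<in>As1. cost1 \<alpha> \<beta> w1 w2 A1s (f A1s) \<le> cost1 \<alpha> \<beta> w1 w2 A1 (f A1))"

definition spe_outcomes :: "('r \<Rightarrow> real) \<Rightarrow> ('r \<Rightarrow> real) \<Rightarrow> real \<Rightarrow> real \<Rightarrow> 'r set set \<Rightarrow> 'r set set
    \<Rightarrow> ('r set \<times> 'r set) set" where
  "spe_outcomes \<alpha> \<beta> w1 w2 As1 As2 =
     {(A1s, f A1s) | f A1s. is_spe \<alpha> \<beta> w1 w2 As1 As2 f A1s}"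

definition opt_cost :: "('r \<Rightarrow> real) \<Rightarrow> ('r \<Rightarrow> real) \<Rightarrow> real \<Rightarrow> real \<Rightarrow> 'r set set \<Rightarrow> 'r set set \<Rightarrow> real" where
  "opt_cost \<alpha> \<beta> w1 w2 As1 As2 =
     Min {social_cost \<alpha> \<beta> w1 w2 A1 A2 | A1 A2. A1 \<in> As1 \<and> A2 \<in> As2}"

definition poa_instance :: "('r \<Rightarrow> real) \<Rightarrow> ('r \<Rightarrow> real) \<Rightarrow> real \<Rightarrow> real \<Rightarrow> 'r set set \<Rightarrow> 'r set set \<Rightarrow> real" where
  "poa_instance \<alpha> \<beta> w1 w2 As1 As2 =
     Max ((\<lambda>(A1, A2). social_cost \<alpha> \<beta> w1 w2 A1 A2 / opt_cost \<alpha> \<beta> w1 w2 As1 As2)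
            ` spe_outcomes \<alpha> \<beta> w1 w2 As1 As2)"

text \<open>A directed (multi)graph: arcs are the elements of R (type nat), each arc e
  goes from vertex src e to vertex tgt e.\<close>

definition is_path :: "nat set \<Rightarrow> (nat \<Rightarrow> nat) \<Rightarrow> (nat \<Rightarrow> nat) \<Rightarrow> nat \<Rightarrow> nat \<Rightarrow> nat list \<Rightarrow> bool" where
  "is_path R src tgt s t es \<longleftrightarrow>
     set es \<subseteq> R \<and>
     (es = [] \<longrightarrow> s = t) \<and>
     (es \<noteq> [] \<longrightarrow> src (hd es) = s \<and> tgt (last es) = t \<and>
        (\<forall>i. Suc i < length es \<longrightarrow> tgt (es ! i) = src (es ! Suc i))) \<and>
     distinct (s # map tgt es)"

definition path_actions :: "nat set \<Rightarrow> (nat \<Rightarrow> nat) \<Rightarrow> (nat \<Rightarrow> nat) \<Rightarrow> nat \<Rightarrow> nat \<Rightarrow> nat set set" where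
  "path_actions R src tgt s t = {set es | es. is_path R src tgt s t es}"

text \<open>Set of instance prices of anarchy over all instances (positive optimum);
  resources are drawn from nat (any finite resource set can be relabelled).\<close>

definition congestion_poas :: "real \<Rightarrow> real \<Rightarrow> real set" where
  "congestion_poas w1 w2 =
     {poa_instance \<alpha> \<beta> w1 w2 As1 As2 | (R :: nat set) \<alpha> \<beta> As1 As2.
        valid_game R \<alpha> \<beta> As1 As2 \<and> opt_cost \<alpha> \<beta> w1 w2 As1 As2 > 0}"

definition network_poas :: "real \<Rightarrow> real \<Rightarrow> real set" where
  "network_poas w1 w2 =
     {poa_instance \<alpha> \<beta> w1 w2 As1 As2 | (R :: nat set) \<alpha> \<beta> As1 As2 src tgt s1 t1 s2 t2.
        As1 = path_actions R src tgt s1 t1 \<and> As2 = path_actions R src tgt s2 t2 \<and>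
        valid_game R \<alpha> \<beta> As1 As2 \<and> opt_cost \<alpha> \<beta> w1 w2 As1 As2 > 0}"

definition is_supremum :: "real set \<Rightarrow> real \<Rightarrow> bool" where
  "is_supremum S \<rho> \<longleftrightarrow> (\<forall>x\<in>S. x \<le> \<rho>) \<and> (\<forall>\<epsilon>>0. \<exists>x\<in>S. \<rho> - \<epsilon> < x)"

end

theory Submission
  imports Defs
begin

(* Upper bound: let (A1, A2) be a subgame-perfect outcome, (O1, O2) an optimum and B the reply
   of player 2 to O1. Equilibrium gives C1(A1,A2) <= C1(O1,B), C2(A1,A2) <= C2(A1,B) and
   C2(O1,B) <= C2(O1,O2). If rho >= 1 and w1 w2 <= (rho - 1)(w1^2 + w2^2), a check of the 32
   membership patterns of a single resource yields
     C2(A1,B) + rho C1(O1,B) <= (rho - 1) C1(A1,A2) + rho C1(O1,O2) + rho C2(O1,B),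
   and chaining these inequalities gives C(A1,A2) <= rho C(O1,O2).
   Lower bound: both players start at the same vertex; a shared arc with cost x leads to a
   junction with free arcs to both sinks, and each player also has a direct arc of constant
   cost (w1 for player 1, w1 + w2 for player 2). If player 1 takes the shared route, player 2 is
   indifferent and may take the direct arc, giving social cost w1^2 + w1 w2 + w2^2 against the
   optimum w1^2 + w2^2. *)

lemma cost1_restrict_singleton:
  "cost1 \<alpha> \<beta> w1 w2 (A1 \<inter> {r}) (A2 \<inter> {r}) =
     (if r \<in> A1 then w1 * (\<alpha> r + \<beta> r * load w1 w2 A1 A2 r) else 0)"
  by (simp add: cost1_def load_def)

lemma cost2_restrict_singleton:
  "cost2 \<alpha> \<beta> w1 w2 (A1 \<inter> {r}) (A2 \<inter> {r}) =
     (if r \<in> A2 then w2 * (\<alpha> r + \<beta> r * load w1 w2 A1 A2 r) else 0)"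
  by (simp add: cost2_def load_def)

lemma cost1_sum_resources:
  assumes "finite R" and "A1 \<subseteq> R"
  shows "cost1 \<alpha> \<beta> w1 w2 A1 A2 = (\<Sum>r\<in>R. cost1 \<alpha> \<beta> w1 w2 (A1 \<inter> {r}) (A2 \<inter> {r}))"
proof -
  have "cost1 \<alpha> \<beta> w1 w2 A1 A2 = (\<Sum>r\<in>R \<inter> A1. w1 * (\<alpha> r + \<beta> r * load w1 w2 A1 A2 r))"
    using assms(2) by (simp add: cost1_def sum_distrib_left Int_absorb1 Int_absorb2)
  also have "\<dots> = (\<Sum>r\<in>R. cost1 \<alpha> \<beta> w1 w2 (A1 \<inter> {r}) (A2 \<inter> {r}))"
    by (simp add: sum.inter_restrict[OF assms(1)] cost1_restrict_singleton)
  finally show ?thesis .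
qed

lemma cost2_sum_resources:
  assumes "finite R" and "A2 \<subseteq> R"
  shows "cost2 \<alpha> \<beta> w1 w2 A1 A2 = (\<Sum>r\<in>R. cost2 \<alpha> \<beta> w1 w2 (A1 \<inter> {r}) (A2 \<inter> {r}))"
proof -
  have "cost2 \<alpha> \<beta> w1 w2 A1 A2 = (\<Sum>r\<in>R \<inter> A2. w2 * (\<alpha> r + \<beta> r * load w1 w2 A1 A2 r))"
    using assms(2) by (simp add: cost2_def sum_distrib_left Int_absorb1 Int_absorb2)
  also have "\<dots> = (\<Sum>r\<in>R. cost2 \<alpha> \<beta> w1 w2 (A1 \<inter> {r}) (A2 \<inter> {r}))"
    by (simp add: sum.inter_restrict[OF assms(1)] cost2_restrict_singleton)
  finally show ?thesis .
qed

lemma smoothness_single_resource: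
  fixes w1 w2 \<rho> :: real
  assumes "w1 \<ge> 0" "w2 \<ge> 0" "\<alpha> r \<ge> 0" "\<beta> r \<ge> 0" "\<rho> \<ge> 1"
    and \<rho>: "w1 * w2 \<le> (\<rho> - 1) * (w1\<^sup>2 + w2\<^sup>2)"
  shows "cost2 \<alpha> \<beta> w1 w2 (A1 \<inter> {r}) (B \<inter> {r}) + \<rho> * cost1 \<alpha> \<beta> w1 w2 (O1 \<inter> {r}) (B \<inter> {r})
    \<le> (\<rho> - 1) * cost1 \<alpha> \<beta> w1 w2 (A1 \<inter> {r}) (A2 \<inter> {r}) + \<rho> * cost1 \<alpha> \<beta> w1 w2 (O1 \<inter> {r}) (O2 \<inter> {r})
       + \<rho> * cost2 \<alpha> \<beta> w1 w2 (O1 \<inter> {r}) (B \<inter> {r})"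
proof -
  have "\<beta> r * (w1 * w2) \<le> \<beta> r * ((\<rho> - 1) * (w1\<^sup>2 + w2\<^sup>2))"
    using \<rho> assms(4) by (rule mult_left_mono)
  moreover have "0 \<le> \<alpha> r * w1 * (\<rho> - 1)" "0 \<le> \<alpha> r * w2 * (\<rho> - 1)" "0 \<le> \<beta> r * w1 * w2"
    "0 \<le> \<beta> r * w1 * w1 * (\<rho> - 1)" "0 \<le> \<beta> r * w2 * w2 * (\<rho> - 1)" "0 \<le> \<beta> r * w1 * w2 * (\<rho> - 1)"
    using assms by simp_all
  ultimately show ?thesis
    unfolding cost1_restrict_singleton cost2_restrict_singleton load_def
    by (cases "r \<in> A1"; cases "r \<in> A2"; cases "r \<in> O1"; cases "r \<in> O2"; cases "r \<in> B")
      (simp_all add: algebra_simps power2_eq_square)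
qed

lemma smoothness_inequality:
  fixes w1 w2 \<rho> :: real
  assumes R: "finite R" and nonneg: "\<forall>r\<in>R. \<alpha> r \<ge> 0 \<and> \<beta> r \<ge> 0"
    and "w1 \<ge> 0" "w2 \<ge> 0" "\<rho> \<ge> 1" "w1 * w2 \<le> (\<rho> - 1) * (w1\<^sup>2 + w2\<^sup>2)"
    and sub: "A1 \<subseteq> R" "A2 \<subseteq> R" "O1 \<subseteq> R" "O2 \<subseteq> R" "B \<subseteq> R"
  shows "cost2 \<alpha> \<beta> w1 w2 A1 B + \<rho> * cost1 \<alpha> \<beta> w1 w2 O1 B
    \<le> (\<rho> - 1) * cost1 \<alpha> \<beta> w1 w2 A1 A2 + \<rho> * cost1 \<alpha> \<beta> w1 w2 O1 O2 + \<rho> * cost2 \<alpha> \<beta> w1 w2 O1 B"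
proof -
  have "(\<Sum>r\<in>R. cost2 \<alpha> \<beta> w1 w2 (A1 \<inter> {r}) (B \<inter> {r}) + \<rho> * cost1 \<alpha> \<beta> w1 w2 (O1 \<inter> {r}) (B \<inter> {r}))
    \<le> (\<Sum>r\<in>R. (\<rho> - 1) * cost1 \<alpha> \<beta> w1 w2 (A1 \<inter> {r}) (A2 \<inter> {r})
          + \<rho> * cost1 \<alpha> \<beta> w1 w2 (O1 \<inter> {r}) (O2 \<inter> {r}) + \<rho> * cost2 \<alpha> \<beta> w1 w2 (O1 \<inter> {r}) (B \<inter> {r}))"
    using nonneg assms(3-6) by (intro sum_mono smoothness_single_resource) auto
  then show ?thesis
    using cost1_sum_resources[OF R] cost2_sum_resources[OF R] sub
    by (simp add: sum.distrib sum_distrib_left)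
qed

lemma spe_social_cost_le:
  fixes w1 w2 \<rho> :: real
  assumes game: "valid_game R \<alpha> \<beta> As1 As2" and spe: "is_spe \<alpha> \<beta> w1 w2 As1 As2 f A1"
    and "w1 \<ge> 0" "w2 \<ge> 0" "\<rho> \<ge> 1" "w1 * w2 \<le> (\<rho> - 1) * (w1\<^sup>2 + w2\<^sup>2)"
    and O: "O1 \<in> As1" "O2 \<in> As2"
  shows "social_cost \<alpha> \<beta> w1 w2 A1 (f A1) \<le> \<rho> * social_cost \<alpha> \<beta> w1 w2 O1 O2"
proof -
  let ?C1 = "cost1 \<alpha> \<beta> w1 w2" and ?C2 = "cost2 \<alpha> \<beta> w1 w2" and ?A2 = "f A1" and ?B = "f O1"
  from spe O have A: "A1 \<in> As1" "?A2 \<in> As2" "?B \<in> As2"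
    and leader: "?C1 A1 ?A2 \<le> ?C1 O1 ?B"
    and follower_A: "?C2 A1 ?A2 \<le> ?C2 A1 ?B"
    and follower_O: "?C2 O1 ?B \<le> ?C2 O1 O2"
    unfolding is_spe_def by auto
  have smooth: "?C2 A1 ?B + \<rho> * ?C1 O1 ?B \<le> (\<rho> - 1) * ?C1 A1 ?A2 + \<rho> * ?C1 O1 O2 + \<rho> * ?C2 O1 ?B"
    using game A O assms(3-6) unfolding valid_game_def by (intro smoothness_inequality) auto
  have "social_cost \<alpha> \<beta> w1 w2 A1 ?A2 \<le> ?C1 A1 ?A2 + ?C2 A1 ?B"
    using follower_A by (simp add: social_cost_def)
  also have "\<dots> \<le> \<rho> * ?C1 A1 ?A2 - \<rho> * ?C1 O1 ?B + \<rho> * ?C1 O1 O2 + \<rho> * ?C2 O1 ?B"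
    using smooth by (simp add: algebra_simps)
  also have "\<dots> \<le> \<rho> * ?C1 O1 O2 + \<rho> * ?C2 O1 ?B"
    using leader \<open>\<rho> \<ge> 1\<close> by (simp add: mult_left_mono)
  also have "\<dots> \<le> \<rho> * social_cost \<alpha> \<beta> w1 w2 O1 O2"
    using follower_O \<open>\<rho> \<ge> 1\<close> by (simp add: social_cost_def distrib_left mult_left_mono)
  finally show ?thesis .
qed

lemma spe_exists:
  assumes "finite As1" "As1 \<noteq> {}" "finite As2" "As2 \<noteq> {}"
  shows "\<exists>f A1. is_spe \<alpha> \<beta> w1 w2 As1 As2 f A1"
proof -
  define f where "f A1 = arg_min_on (cost2 \<alpha> \<beta> w1 w2 A1) As2" for A1
  define A1 where "A1 = arg_min_on (\<lambda>A1. cost1 \<alpha> \<beta> w1 w2 A1 (f A1)) As1"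
  have "is_spe \<alpha> \<beta> w1 w2 As1 As2 f A1"
    unfolding is_spe_def
  proof (intro conjI ballI)
    fix A1' A2 assume "A2 \<in> As2"
    then show "cost2 \<alpha> \<beta> w1 w2 A1' (f A1') \<le> cost2 \<alpha> \<beta> w1 w2 A1' A2"
      unfolding f_def by (rule arg_min_least[OF assms(3,4)])
  next
    fix A1' assume "A1' \<in> As1"
    then show "cost1 \<alpha> \<beta> w1 w2 A1 (f A1) \<le> cost1 \<alpha> \<beta> w1 w2 A1' (f A1')"
      unfolding A1_def by (rule arg_min_least[OF assms(1,2)])
  qed (use assms in \<open>simp_all add: f_def A1_def arg_min_if_finite(1)\<close>)
  then show ?thesis by blast
qed

lemma spe_outcomes_subset: "spe_outcomes \<alpha> \<beta> w1 w2 As1 As2 \<subseteq> As1 \<times> As2"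
  unfolding spe_outcomes_def is_spe_def by auto

lemma social_costs_eq_image:
  "{social_cost \<alpha> \<beta> w1 w2 A1 A2 | A1 A2. A1 \<in> As1 \<and> A2 \<in> As2}
     = (\<lambda>(A1, A2). social_cost \<alpha> \<beta> w1 w2 A1 A2) ` (As1 \<times> As2)"
  by auto

lemma opt_cost_le:
  assumes "finite As1" "finite As2" "A1 \<in> As1" "A2 \<in> As2"
  shows "opt_cost \<alpha> \<beta> w1 w2 As1 As2 \<le> social_cost \<alpha> \<beta> w1 w2 A1 A2"
  unfolding opt_cost_def social_costs_eq_image using assms by (auto intro: Min_le)

lemma opt_cost_attained:
  assumes "finite As1" "As1 \<noteq> {}" "finite As2" "As2 \<noteq> {}"
  obtains O1 O2 where "O1 \<in> As1" "O2 \<in> As2"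
    and "opt_cost \<alpha> \<beta> w1 w2 As1 As2 = social_cost \<alpha> \<beta> w1 w2 O1 O2"
proof -
  have "opt_cost \<alpha> \<beta> w1 w2 As1 As2 \<in> (\<lambda>(A1, A2). social_cost \<alpha> \<beta> w1 w2 A1 A2) ` (As1 \<times> As2)"
    unfolding opt_cost_def social_costs_eq_image using assms by (intro Min_in) auto
  then show ?thesis using that by auto
qed

lemma poa_instance_le:
  fixes w1 w2 \<rho> :: real
  assumes game: "valid_game R \<alpha> \<beta> As1 As2" and opt: "opt_cost \<alpha> \<beta> w1 w2 As1 As2 > 0"
    and "w1 \<ge> 0" "w2 \<ge> 0" "\<rho> \<ge> 1" "w1 * w2 \<le> (\<rho> - 1) * (w1\<^sup>2 + w2\<^sup>2)"
  shows "poa_instance \<alpha> \<beta> w1 w2 As1 As2 \<le> \<rho>"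
proof -
  let ?ratio = "\<lambda>(A1, A2). social_cost \<alpha> \<beta> w1 w2 A1 A2 / opt_cost \<alpha> \<beta> w1 w2 As1 As2"
  from game have fin: "finite As1" "As1 \<noteq> {}" "finite As2" "As2 \<noteq> {}"
    unfolding valid_game_def by auto
  obtain O1 O2 where O: "O1 \<in> As1" "O2 \<in> As2"
    and opt_eq: "opt_cost \<alpha> \<beta> w1 w2 As1 As2 = social_cost \<alpha> \<beta> w1 w2 O1 O2"
    using opt_cost_attained[OF fin] .
  have "finite (spe_outcomes \<alpha> \<beta> w1 w2 As1 As2)"
    using fin by (intro finite_subset[OF spe_outcomes_subset]) simp
  moreover have "spe_outcomes \<alpha> \<beta> w1 w2 As1 As2 \<noteq> {}"
    using spe_exists[OF fin, of \<alpha> \<beta> w1 w2] unfolding spe_outcomes_def by auto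
  moreover have "?ratio A \<le> \<rho>" if "A \<in> spe_outcomes \<alpha> \<beta> w1 w2 As1 As2" for A
  proof -
    from that obtain f A1 where spe: "is_spe \<alpha> \<beta> w1 w2 As1 As2 f A1" and A: "A = (A1, f A1)"
      unfolding spe_outcomes_def by auto
    have "social_cost \<alpha> \<beta> w1 w2 A1 (f A1) \<le> \<rho> * opt_cost \<alpha> \<beta> w1 w2 As1 As2"
      unfolding opt_eq by (rule spe_social_cost_le[OF game spe assms(3-6) O])
    then show ?thesis
      using opt by (simp add: A pos_divide_le_eq mult.commute)
  qed
  ultimately show ?thesis
    unfolding poa_instance_def by (subst Max_le_iff) auto
qed

lemma poa_instance_ge:
  assumes "finite As1" "finite As2" "is_spe \<alpha> \<beta> w1 w2 As1 As2 f A1"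
  shows "social_cost \<alpha> \<beta> w1 w2 A1 (f A1) / opt_cost \<alpha> \<beta> w1 w2 As1 As2 \<le> poa_instance \<alpha> \<beta> w1 w2 As1 As2"
proof -
  let ?ratio = "\<lambda>(A1, A2). social_cost \<alpha> \<beta> w1 w2 A1 A2 / opt_cost \<alpha> \<beta> w1 w2 As1 As2"
  have "finite (spe_outcomes \<alpha> \<beta> w1 w2 As1 As2)"
    using assms(1,2) by (intro finite_subset[OF spe_outcomes_subset]) simp
  moreover have "(A1, f A1) \<in> spe_outcomes \<alpha> \<beta> w1 w2 As1 As2"
    using assms(3) unfolding spe_outcomes_def by auto
  ultimately have "?ratio (A1, f A1) \<le> Max (?ratio ` spe_outcomes \<alpha> \<beta> w1 w2 As1 As2)"
    by (intro Max_ge finite_imageI imageI)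
  then show ?thesis
    by (simp add: poa_instance_def)
qed

lemma network_poas_subset: "network_poas w1 w2 \<subseteq> congestion_poas w1 w2"
  unfolding network_poas_def congestion_poas_def by blast

lemma congestion_poas_le:
  fixes w1 w2 \<rho> :: real
  assumes "w1 \<ge> 0" "w2 \<ge> 0" "\<rho> \<ge> 1" "w1 * w2 \<le> (\<rho> - 1) * (w1\<^sup>2 + w2\<^sup>2)"
  shows "\<forall>x\<in>congestion_poas w1 w2. x \<le> \<rho>"
proof
  fix x assume "x \<in> congestion_poas w1 w2"
  then obtain R :: "nat set" and \<alpha> \<beta> As1 As2 where "x = poa_instance \<alpha> \<beta> w1 w2 As1 As2"
    and "valid_game R \<alpha> \<beta> As1 As2" and "opt_cost \<alpha> \<beta> w1 w2 As1 As2 > 0"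
    unfolding congestion_poas_def by auto
  then show "x \<le> \<rho>"
    using poa_instance_le[OF _ _ assms] by blast
qed

lemma is_supremumI:
  assumes "\<forall>x\<in>S. x \<le> \<rho>" and "x \<in> S" and "\<rho> \<le> x"
  shows "is_supremum S \<rho>"
  using assms unfolding is_supremum_def by force

lemma is_path_Nil [simp]: "is_path R src tgt s t [] \<longleftrightarrow> s = t"
  by (simp add: is_path_def)

lemma is_path_Cons:
  "is_path R src tgt s t (e # es) \<longleftrightarrow>
     e \<in> R \<and> src e = s \<and> s \<notin> tgt ` set (e # es) \<and> is_path R src tgt (tgt e) t es"
  by (cases es) (auto simp: is_path_def less_Suc_eq_0_disj)

lemma is_path_from_sink:
  assumes "\<forall>e\<in>R. src e \<noteq> s"
  shows "is_path R src tgt s t es \<longleftrightarrow> es = [] \<and> s = t"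
  using assms by (cases es) (auto simp: is_path_Cons)

(* One_nat_def would rewrite the arc and vertex 1 to Suc 0, out of reach of the evaluation lemmas. *)
context
  notes One_nat_def [simp del]
begin

(* The lower-bound network: vertex 0 is the common source, 1 and 2 are the sinks of players 1
   and 2, and 3 is the junction; the arcs are 0: 0->1, 1: 0->2, 2: 0->3, 3: 3->1, 4: 3->2. *)
definition lb_arcs :: "nat set" where
  "lb_arcs = {0, 1, 2, 3, 4}"

definition lb_src :: "nat \<Rightarrow> nat" where
  "lb_src e = (if e \<in> {3, 4} then 3 else 0)"

definition lb_tgt :: "nat \<Rightarrow> nat" where
  "lb_tgt e = (if e \<in> {0, 3} then 1 else if e = 2 then 3 else 2)"

lemma mem_lb_arcs: "e \<in> lb_arcs \<longleftrightarrow> e \<in> {0, 1, 2, 3, 4}"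
  by (simp add: lb_arcs_def)

lemma lb_paths_from_sinks:
  "v \<in> {1, 2} \<Longrightarrow> is_path lb_arcs lb_src lb_tgt v t es \<longleftrightarrow> es = [] \<and> v = t"
  by (rule is_path_from_sink) (auto simp: mem_lb_arcs lb_src_def)

lemma lb_paths_from_junction:
  "is_path lb_arcs lb_src lb_tgt 3 t es \<longleftrightarrow> es = [] \<and> t = 3 \<or> es = [3] \<and> t = 1 \<or> es = [4] \<and> t = 2"
  by (cases es) (auto simp: is_path_Cons lb_paths_from_sinks mem_lb_arcs lb_src_def lb_tgt_def)

lemma lb_paths_from_source:
  "is_path lb_arcs lb_src lb_tgt 0 t es \<longleftrightarrow>
     es = [] \<and> t = 0 \<or> es = [0] \<and> t = 1 \<or> es = [1] \<and> t = 2 \<or>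
     es = [2] \<and> t = 3 \<or> es = [2, 3] \<and> t = 1 \<or> es = [2, 4] \<and> t = 2"
  by (cases es)
    (auto simp: is_path_Cons lb_paths_from_sinks lb_paths_from_junction mem_lb_arcs lb_src_def lb_tgt_def)

lemma lb_path_actions:
  "path_actions lb_arcs lb_src lb_tgt 0 1 = {{0}, {2, 3}}"
  "path_actions lb_arcs lb_src lb_tgt 0 2 = {{1}, {2, 4}}"
  by (force simp: path_actions_def lb_paths_from_source)+

definition lb_alpha :: "real \<Rightarrow> real \<Rightarrow> nat \<Rightarrow> real" where
  "lb_alpha w1 w2 e = (if e = 0 then w1 else if e = 1 then w1 + w2 else 0)"

definition lb_beta :: "nat \<Rightarrow> real" where
  "lb_beta e = (if e = 2 then 1 else 0)"

definition lb_follower :: "nat set \<Rightarrow> nat set" where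
  "lb_follower A1 = (if A1 = {2, 3} then {1} else {2, 4})"

lemma lb_costs:
  "cost1 (lb_alpha w1 w2) lb_beta w1 w2 {0} {2, 4} = w1 * w1"
  "cost1 (lb_alpha w1 w2) lb_beta w1 w2 {2, 3} {1} = w1 * w1"
  "cost2 (lb_alpha w1 w2) lb_beta w1 w2 {0} {1} = w2 * (w1 + w2)"
  "cost2 (lb_alpha w1 w2) lb_beta w1 w2 {0} {2, 4} = w2 * w2"
  "cost2 (lb_alpha w1 w2) lb_beta w1 w2 {2, 3} {1} = w2 * (w1 + w2)"
  "cost2 (lb_alpha w1 w2) lb_beta w1 w2 {2, 3} {2, 4} = w2 * (w1 + w2)"
  by (simp_all add: cost1_def cost2_def load_def lb_alpha_def lb_beta_def algebra_simps)

lemma lb_social_costs: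
  "social_cost (lb_alpha w1 w2) lb_beta w1 w2 {0} {1} = w1\<^sup>2 + w1 * w2 + w2\<^sup>2"
  "social_cost (lb_alpha w1 w2) lb_beta w1 w2 {0} {2, 4} = w1\<^sup>2 + w2\<^sup>2"
  "social_cost (lb_alpha w1 w2) lb_beta w1 w2 {2, 3} {1} = w1\<^sup>2 + w1 * w2 + w2\<^sup>2"
  "social_cost (lb_alpha w1 w2) lb_beta w1 w2 {2, 3} {2, 4} = (w1 + w2)\<^sup>2"
  by (simp_all add: social_cost_def cost1_def cost2_def load_def lb_alpha_def lb_beta_def
      power2_eq_square algebra_simps)

lemma lb_valid_game:
  "w1 \<ge> 0 \<Longrightarrow> w2 \<ge> 0 \<Longrightarrow> valid_game lb_arcs (lb_alpha w1 w2) lb_beta {{0}, {2, 3}} {{1}, {2, 4}}"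
  by (auto simp: valid_game_def lb_arcs_def lb_alpha_def lb_beta_def)

lemma lb_opt_cost:
  fixes w1 w2 :: real
  assumes "w1 \<ge> 0" "w2 \<ge> 0"
  shows "opt_cost (lb_alpha w1 w2) lb_beta w1 w2 {{0}, {2, 3}} {{1}, {2, 4}} = w1\<^sup>2 + w2\<^sup>2"
proof (rule antisym)
  have "opt_cost (lb_alpha w1 w2) lb_beta w1 w2 {{0}, {2, 3}} {{1}, {2, 4}}
          \<le> social_cost (lb_alpha w1 w2) lb_beta w1 w2 {0} {2, 4}"
    by (rule opt_cost_le) auto
  then show "opt_cost (lb_alpha w1 w2) lb_beta w1 w2 {{0}, {2, 3}} {{1}, {2, 4}} \<le> w1\<^sup>2 + w2\<^sup>2"
    by (simp add: lb_social_costs)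
  obtain O1 O2 where "O1 \<in> {{0}, {2, 3}}" "O2 \<in> {{1::nat}, {2, 4}}"
    and "opt_cost (lb_alpha w1 w2) lb_beta w1 w2 {{0}, {2, 3}} {{1}, {2, 4}}
           = social_cost (lb_alpha w1 w2) lb_beta w1 w2 O1 O2"
    by (rule opt_cost_attained[of "{{0}, {2, 3}}" "{{1}, {2, 4}}"]) auto
  moreover have "0 \<le> w1 * w2"
    using assms by simp
  ultimately show "w1\<^sup>2 + w2\<^sup>2 \<le> opt_cost (lb_alpha w1 w2) lb_beta w1 w2 {{0}, {2, 3}} {{1}, {2, 4}}"
    by (auto simp: lb_social_costs power2_eq_square algebra_simps)
qed

lemma lb_spe:
  fixes w1 w2 :: real
  assumes "w1 \<ge> 0" "w2 \<ge> 0"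
  shows "is_spe (lb_alpha w1 w2) lb_beta w1 w2 {{0}, {2, 3}} {{1}, {2, 4}} lb_follower {2, 3}"
proof -
  have "w2 * w2 \<le> w2 * (w1 + w2)"
    using assms by (simp add: mult_left_mono)
  then show ?thesis
    by (auto simp: is_spe_def lb_follower_def lb_costs)
qed

lemma lb_network_poa:
  fixes w1 w2 :: real
  assumes "w1 \<ge> 0" "w2 \<ge> 0" "w1 + w2 > 0"
  shows "\<exists>x\<in>network_poas w1 w2. 1 + w1 * w2 / (w1\<^sup>2 + w2\<^sup>2) \<le> x"
proof -
  let ?As1 = "path_actions lb_arcs lb_src lb_tgt 0 1" and ?As2 = "path_actions lb_arcs lb_src lb_tgt 0 2"
  let ?poa = "poa_instance (lb_alpha w1 w2) lb_beta w1 w2 ?As1 ?As2"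
  have pos: "w1\<^sup>2 + w2\<^sup>2 > 0"
    using assms by (auto simp: sum_power2_gt_zero_iff)
  have opt: "opt_cost (lb_alpha w1 w2) lb_beta w1 w2 ?As1 ?As2 = w1\<^sup>2 + w2\<^sup>2"
    unfolding lb_path_actions using assms(1,2) by (rule lb_opt_cost)
  have "valid_game lb_arcs (lb_alpha w1 w2) lb_beta ?As1 ?As2"
    unfolding lb_path_actions using assms(1,2) by (rule lb_valid_game)
  moreover have "opt_cost (lb_alpha w1 w2) lb_beta w1 w2 ?As1 ?As2 > 0"
    using opt pos by simp
  ultimately have "?poa \<in> network_poas w1 w2"
    unfolding network_poas_def by blast
  moreover have "social_cost (lb_alpha w1 w2) lb_beta w1 w2 {2, 3} {1} / (w1\<^sup>2 + w2\<^sup>2)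
                   = 1 + w1 * w2 / (w1\<^sup>2 + w2\<^sup>2)"
    using pos by (auto simp: lb_social_costs field_split_simps)
  moreover have "social_cost (lb_alpha w1 w2) lb_beta w1 w2 {2, 3} {1} / (w1\<^sup>2 + w2\<^sup>2) \<le> ?poa"
    using poa_instance_ge[OF _ _ lb_spe[OF assms(1,2)]] opt by (simp add: lb_path_actions lb_follower_def)
  ultimately show ?thesis
    by auto
qed

end

theorem theorem7:
  fixes w1 w2 :: real
  assumes "w1 \<ge> 0" and "w2 \<ge> 0" and "w1 + w2 > 0"
  shows "is_supremum (congestion_poas w1 w2) (1 + w1 * w2 / (w1\<^sup>2 + w2\<^sup>2)) \<and>
         is_supremum (network_poas w1 w2) (1 + w1 * w2 / (w1\<^sup>2 + w2\<^sup>2))"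
proof -
  let ?\<rho> = "1 + w1 * w2 / (w1\<^sup>2 + w2\<^sup>2)"
  have "w1\<^sup>2 + w2\<^sup>2 > 0"
    using assms by (auto simp: sum_power2_gt_zero_iff)
  then have "?\<rho> \<ge> 1" and "w1 * w2 \<le> (?\<rho> - 1) * (w1\<^sup>2 + w2\<^sup>2)"
    using assms by simp_all
  then have upper: "\<forall>x\<in>congestion_poas w1 w2. x \<le> ?\<rho>"
    using assms(1,2) by (rule congestion_poas_le[rotated 2])
  obtain x where "x \<in> network_poas w1 w2" and "?\<rho> \<le> x"
    using lb_network_poa[OF assms] ..
  then show ?thesis
    using upper network_poas_subset by (intro conjI is_supremumI) auto
qed

end
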